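(* For any odd prime $p$, any integer $\alpha\ge0$ and any integer $n\ge0$, \[ b_4\!\left(p^{2\alpha+1}n+\frac{(8j+1)p^{2\alpha}-1}{8}\right)\equiv 0 \pmod 2 \] for every integer $j$ with $0\le j\le p-1$ and $\left(\frac{8j+1}{p}\right)=-1$.
   Context: For a positive integer $\ell$, $b_\ell(n)$ denotes the number of partitions of $n$ having no part divisible by $\ell$. $\left(\frac{a}{p}\right)$ is the Legendre symbol. *)

theory Defs
  imports "HOL-Number_Theory.Number_Theory" "HOL-Library.Multiset"
begin

definition b :: "nat \<Rightarrow> nat \<Rightarrow> nat" where
  "b l n = card {M :: nat multiset. (\<forall>x \<in># M. 0 < x \<and> \<not> l dvd x) \<and> sum_mset M = n}"

end

theory Submission
  imports Defs "HOL-Computational_Algebra.Formal_Power_Series" "HOL-Library.Z2"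
begin

text \<open>Over GF(2) the generating function of \<open>b\<^sub>4\<close> is the inverse of the product of
  \<open>1 + q\<^sup>m\<close> over all \<open>m\<close> not divisible by 4. Since \<open>(1 + q\<^sup>m)\<^sup>2 = 1 + q\<^bsup>2m\<^esup>\<close> in
  characteristic 2, Euler's identity \<open>\<Prod>\<^sub>m (1 + q\<^sup>m) \<cdot> \<Prod>\<^bsub>m odd\<^esub> (1 + q\<^sup>m) = 1\<close> holds mod 2,
  so the generating function equals \<open>\<Prod>\<^bsub>m odd\<^esub> (1 + q\<^sup>m) \<cdot> \<Prod>\<^sub>m (1 + q\<^bsup>4m\<^esup>)\<close>. By the
  Jacobi triple product with \<open>x = q\<^sup>2\<close> and \<open>z = q\<^sup>-\<^sup>1\<close> this is \<open>\<Sum>\<^bsub>m \<in> \<int>\<^esub> q\<^bsup>2m\<^sup>2 - m\<^esup>\<close>,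
  so \<open>b\<^sub>4 N\<close> is odd only if \<open>8N + 1 = (4m - 1)\<^sup>2\<close>. For the arguments in the theorem
  \<open>8N + 1 = p\<^bsup>2\<alpha>\<^esup> (8pn + 8j + 1)\<close>, so \<open>8pn + 8j + 1\<close> would be a square and \<open>8j + 1\<close> a
  quadratic residue mod \<open>p\<close>.

  Infinite products are replaced by finite ones compared modulo a power of \<open>X\<close>, and the
  triple product is derived from the q-binomial theorem.\<close>

lemma prod_lessThan_add:
  fixes f :: "nat \<Rightarrow> 'a :: comm_monoid_mult"
  shows "(\<Prod>i<m + n. f i) = (\<Prod>i<m. f i) * (\<Prod>i<n. f (m + i))"
  by (induction n) (simp_all add: mult_ac)

lemma prod_lessThan_rev:
  fixes f :: "nat \<Rightarrow> 'a :: comm_monoid_mult"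
  shows "(\<Prod>i<n. f (n - Suc i)) = (\<Prod>i<n. f i)"
  by (rule prod.reindex_bij_witness[where i = "\<lambda>i. n - Suc i" and j = "\<lambda>i. n - Suc i"]) auto

section \<open>Partitions with bounded parts\<close>

definition restricted_partitions :: "nat \<Rightarrow> nat \<Rightarrow> nat \<Rightarrow> nat multiset set" where
  "restricted_partitions l N n =
     {M. (\<forall>x\<in>#M. 0 < x \<and> \<not> l dvd x \<and> x \<le> N) \<and> sum_mset M = n}"

lemma mset_le_sum_mset: "x \<in># (M::nat multiset) \<Longrightarrow> x \<le> sum_mset M"
  using sum_mset.remove[of x M] by simp

lemma b_eq_card_restricted_partitions: "b l n = card (restricted_partitions l n n)"
proof -
  have "{M. (\<forall>x \<in># M. 0 < x \<and> \<not> l dvd x) \<and> sum_mset M = n} = restricted_partitions l n n"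
    by (auto simp: restricted_partitions_def dest: mset_le_sum_mset)
  then show ?thesis by (simp add: b_def)
qed

lemma restricted_partitions_0: "restricted_partitions l 0 n = (if n = 0 then {{#}} else {})"
proof -
  have "(\<forall>x\<in>#M. 0 < x \<and> \<not> l dvd x \<and> x \<le> 0) \<longleftrightarrow> M = {#}" for M :: "nat multiset"
    by (cases M) auto
  then show ?thesis
    by (auto simp: restricted_partitions_def)
qed

lemma restricted_partitions_Suc:
  "restricted_partitions l (Suc N) n = restricted_partitions l N n \<union>
     (if \<not> l dvd Suc N \<and> Suc N \<le> n
      then add_mset (Suc N) ` restricted_partitions l (Suc N) (n - Suc N) else {})"
  (is "?A = ?B \<union> ?C")
proof (intro Set.set_eqI iffI)
  fix M assume M: "M \<in> ?A"
  show "M \<in> ?B \<union> ?C"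
  proof (cases "Suc N \<in># M")
    case True
    have "\<not> l dvd Suc N" "Suc N \<le> n"
      using M True mset_le_sum_mset by (auto simp: restricted_partitions_def)
    moreover have "M - {#Suc N#} \<in> restricted_partitions l (Suc N) (n - Suc N)"
      using M sum_mset.remove[OF True] by (auto simp: restricted_partitions_def dest: in_diffD)
    moreover have "M = add_mset (Suc N) (M - {#Suc N#})"
      using True by simp
    ultimately show ?thesis
      by (metis UnI2 image_eqI)
  next
    case False
    then show ?thesis
      using M by (auto simp: restricted_partitions_def le_Suc_eq)
  qed
next
  fix M assume "M \<in> ?B \<union> ?C"
  then show "M \<in> ?A"
    by (auto simp: restricted_partitions_def split: if_splits)
qed

lemma finite_restricted_partitions: "finite (restricted_partitions l N n)"
proof (induction N arbitrary: n)
  case 0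
  then show ?case by (simp add: restricted_partitions_0)
next
  case (Suc N)
  show ?case
  proof (induction n rule: less_induct)
    case (less n)
    then show ?case
      using Suc.IH by (subst restricted_partitions_Suc) auto
  qed
qed

lemma card_restricted_partitions_Suc:
  "card (restricted_partitions l (Suc N) n) = card (restricted_partitions l N n) +
     (if \<not> l dvd Suc N \<and> Suc N \<le> n
      then card (restricted_partitions l (Suc N) (n - Suc N)) else 0)"
proof -
  have "Suc N \<notin># M" if "M \<in> restricted_partitions l N n" for M
    using that by (auto simp: restricted_partitions_def)
  then have "restricted_partitions l N n \<inter>
      add_mset (Suc N) ` restricted_partitions l (Suc N) (n - Suc N) = {}"
    by fastforce
  then show ?thesis
    by (subst restricted_partitions_Suc)
       (simp add: card_Un_disjoint finite_restricted_partitions card_image inj_on_def)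
qed

definition partition_gf :: "nat \<Rightarrow> nat \<Rightarrow> 'a :: comm_ring_1 fps" where
  "partition_gf l N = Abs_fps (\<lambda>n. of_nat (card (restricted_partitions l N n)))"

lemma partition_gf_0: "partition_gf l 0 = 1"
  by (rule fps_ext) (simp add: partition_gf_def restricted_partitions_0)

lemma partition_gf_Suc:
  "partition_gf l (Suc N) * (if l dvd Suc N then 1 else 1 - fps_X ^ Suc N) = partition_gf l N"
proof (rule fps_ext)
  fix n
  show "fps_nth (partition_gf l (Suc N) * (if l dvd Suc N then 1 else 1 - fps_X ^ Suc N)) n =
        fps_nth (partition_gf l N) n"
    by (auto simp: partition_gf_def card_restricted_partitions_Suc[of l N n] algebra_simps
          fps_X_power_mult_right_nth fps_X_power_mult_nth simp del: power_Suc)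
qed

lemma partition_gf_mult_prod:
  "partition_gf l N * (\<Prod>m<N. if l dvd Suc m then 1 else 1 - fps_X ^ Suc m) = 1"
proof (induction N)
  case 0
  then show ?case by (simp add: partition_gf_0)
next
  case (Suc N)
  then show ?case
    by (simp only: prod.lessThan_Suc mult.assoc[symmetric] mult.commute[of _ "if _ then _ else _"]
        flip: partition_gf_Suc[of l N])
qed

lemma partition_gf_nth: "fps_nth (partition_gf l n) n = of_nat (b l n)"
  by (simp add: partition_gf_def b_eq_card_restricted_partitions)

section \<open>Congruence of power series modulo a power of \<open>X\<close>\<close>

definition fps_cong :: "nat \<Rightarrow> 'a :: zero fps \<Rightarrow> 'a fps \<Rightarrow> bool" where
  "fps_cong k f g \<longleftrightarrow> (\<forall>i<k. fps_nth f i = fps_nth g i)"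

lemma fps_cong_refl [simp]: "fps_cong k f f"
  by (simp add: fps_cong_def)

lemma fps_cong_sym: "fps_cong k f g \<Longrightarrow> fps_cong k g f"
  by (simp add: fps_cong_def)

lemma fps_cong_trans [trans]: "fps_cong k f g \<Longrightarrow> fps_cong k g h \<Longrightarrow> fps_cong k f h"
  by (simp add: fps_cong_def)

lemma fps_cong_mono: "fps_cong k f g \<Longrightarrow> k' \<le> k \<Longrightarrow> fps_cong k' f g"
  by (simp add: fps_cong_def)

lemma fps_cong_mult_right:
  fixes f g h :: "'a :: comm_semiring_1 fps"
  shows "fps_cong k f g \<Longrightarrow> fps_cong k (f * h) (g * h)"
  unfolding fps_cong_def fps_mult_nth by (auto intro!: sum.cong)

lemma fps_cong_mult_left:
  fixes f g h :: "'a :: comm_semiring_1 fps"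
  shows "fps_cong k f g \<Longrightarrow> fps_cong k (h * f) (h * g)"
  using fps_cong_mult_right[of k f g h] by (simp add: mult.commute)

lemma fps_cong_mult:
  fixes f g f' g' :: "'a :: comm_semiring_1 fps"
  shows "fps_cong k f g \<Longrightarrow> fps_cong k f' g' \<Longrightarrow> fps_cong k (f * f') (g * g')"
  by (meson fps_cong_mult_left fps_cong_mult_right fps_cong_trans)

lemma fps_cong_sum:
  fixes f g :: "'b \<Rightarrow> 'a :: comm_monoid_add fps"
  shows "(\<And>i. i \<in> S \<Longrightarrow> fps_cong k (f i) (g i)) \<Longrightarrow> fps_cong k (sum f S) (sum g S)"
  by (simp add: fps_cong_def fps_sum_nth)

lemma fps_cong_X_power_mult_zero:
  fixes f :: "'a :: comm_semiring_1 fps"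
  shows "k \<le> e \<Longrightarrow> fps_cong k (fps_X ^ e * f) 0"
  unfolding fps_cong_def fps_X_power_mult_nth by auto

lemma fps_cong_prod_one_plus_X_power:
  fixes e :: "'b \<Rightarrow> nat"
  assumes "\<And>i. i \<in> I \<Longrightarrow> k \<le> e i"
  shows "fps_cong k (\<Prod>i\<in>I. 1 + fps_X ^ e i :: 'a :: comm_semiring_1 fps) 1"
  using assms
proof (induction I rule: infinite_finite_induct)
  case (insert i I)
  have "k \<le> e i"
    using insert.prems by simp
  then have "fps_cong k (1 + fps_X ^ e i :: 'a fps) 1"
    by (auto simp: fps_cong_def)
  then have "fps_cong k ((1 + fps_X ^ e i) * (\<Prod>i\<in>I. 1 + fps_X ^ e i :: 'a fps)) (1 * 1)"
    using insert by (intro fps_cong_mult) auto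
  then show ?case
    using insert.hyps by simp
qed simp_all

lemma fps_cong_cancel:
  fixes f g u :: "'a :: field fps"
  assumes "fps_cong k (f * u) (g * u)" and "fps_nth u 0 \<noteq> 0"
  shows "fps_cong k f g"
proof -
  have "fps_cong k (f * u * inverse u) (g * u * inverse u)"
    using assms(1) by (rule fps_cong_mult_right)
  then show ?thesis
    using inverse_mult_eq_1'[OF assms(2)] by (simp add: mult.assoc)
qed

section \<open>Gaussian binomial coefficients\<close>

fun qbinomial :: "'a :: comm_ring_1 \<Rightarrow> nat \<Rightarrow> nat \<Rightarrow> 'a" where
  "qbinomial Q 0 k = (if k = 0 then 1 else 0)"
| "qbinomial Q (Suc N) k =
     (if k = 0 then 1 else qbinomial Q N k + Q ^ (Suc N - k) * qbinomial Q N (k - 1))"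

lemma qbinomial_eq_0: "N < k \<Longrightarrow> qbinomial Q N k = 0"
  by (induction N arbitrary: k) auto

lemma qbinomial_0_right [simp]: "qbinomial Q N 0 = 1"
  by (cases N) auto

lemma qbinomial_self: "qbinomial Q N N = 1"
  by (induction N) (auto simp: qbinomial_eq_0)

definition qpochhammer :: "'a :: comm_ring_1 \<Rightarrow> nat \<Rightarrow> 'a" where
  "qpochhammer Q j = (\<Prod>t<j. 1 - Q ^ Suc t)"

lemma qpochhammer_Suc: "qpochhammer Q (Suc j) = qpochhammer Q j * (1 - Q ^ Suc j)"
  by (simp add: qpochhammer_def)

lemma qbinomial_mult_qpochhammer:
  "k \<le> N \<Longrightarrow> qbinomial Q N k * qpochhammer Q k * qpochhammer Q (N - k) = qpochhammer Q N"
proof (induction N arbitrary: k)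
  case 0
  then show ?case by (simp add: qpochhammer_def)
next
  case (Suc N)
  consider "k = 0" | "k = Suc N" | k' where "k = Suc k'" "k' < N"
    using Suc.prems by (cases k) (auto simp: le_less)
  then show ?case
  proof cases
    case 3
    have IH1: "qbinomial Q N k * qpochhammer Q k * qpochhammer Q (N - k) = qpochhammer Q N"
      using 3 by (intro Suc.IH) simp
    have IH2: "qbinomial Q N k' * qpochhammer Q k' * qpochhammer Q (N - k') = qpochhammer Q N"
      using 3 by (intro Suc.IH) simp
    define a where "a = Q ^ Suc (N - k)"
    define c where "c = Q ^ k"
    have "Suc (N - k) + k = Suc N"
      using 3 by simp
    then have ac: "a * c = Q ^ Suc N"
      unfolding a_def c_def by (metis power_add)
    have k: "Suc N - k = Suc (N - k)" "N - k' = Suc (N - k)"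
      using 3 by simp_all
    have pk: "qpochhammer Q k = qpochhammer Q k' * (1 - c)"
      by (simp add: c_def 3 qpochhammer_Suc)
    have pN: "qpochhammer Q (Suc (N - k)) = qpochhammer Q (N - k) * (1 - a)"
      by (simp add: a_def qpochhammer_Suc)
    have "qbinomial Q (Suc N) k * qpochhammer Q k * qpochhammer Q (Suc N - k)
        = (qbinomial Q N k + a * qbinomial Q N k') * qpochhammer Q k * qpochhammer Q (Suc (N - k))"
      using 3 k by (simp add: a_def)
    also have "\<dots> = (qbinomial Q N k * qpochhammer Q k * qpochhammer Q (N - k)) * (1 - a)
          + a * (qbinomial Q N k' * qpochhammer Q k' * qpochhammer Q (N - k')) * (1 - c)"
      unfolding pN k(2) pk by (simp add: algebra_simps)
    also have "\<dots> = qpochhammer Q (Suc N)"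
      unfolding IH1 IH2 qpochhammer_Suc ac[symmetric] by (simp add: algebra_simps)
    finally show ?thesis .
  qed (simp_all add: qpochhammer_def qbinomial_eq_0 qbinomial_self)
qed

lemma Suc_choose_two: "Suc i choose 2 = (i choose 2) + i"
  using binomial_Suc_Suc[of i 1] by (simp add: numeral_2_eq_2 del: binomial_Suc_Suc)

theorem q_binomial_theorem:
  "(\<Prod>r<N. y + Q ^ r) = (\<Sum>i\<le>N. qbinomial Q N i * Q ^ (i choose 2) * y ^ (N - i))"
proof (induction N)
  case 0
  then show ?case by (simp add: numeral_2_eq_2)
next
  case (Suc N)
  define t where "t i = qbinomial Q N i * Q ^ (i choose 2)" for i
  have "(\<Prod>r<Suc N. y + Q ^ r) = (\<Sum>i\<le>N. t i * y ^ (N - i)) * (y + Q ^ N)"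
    using Suc by (simp add: t_def)
  also have "\<dots> = (\<Sum>i\<le>N. t i * y ^ Suc (N - i)) + (\<Sum>i\<le>N. Q ^ N * t i * y ^ (N - i))"
    by (simp only: distrib_left sum_distrib_right) (simp add: mult_ac)
  also have "(\<Sum>i\<le>N. t i * y ^ Suc (N - i)) = y ^ Suc N + (\<Sum>i<N. t (Suc i) * y ^ (N - i))"
    by (subst sum.atMost_shift) (simp add: t_def numeral_2_eq_2 Suc_diff_Suc)
  also have "(\<Sum>i<N. t (Suc i) * y ^ (N - i)) = (\<Sum>i\<le>N. t (Suc i) * y ^ (N - i))"
    by (simp add: t_def qbinomial_eq_0 flip: lessThan_Suc_atMost)
  also have "(\<Sum>i\<le>N. Q ^ N * t i * y ^ (N - i))
      = (\<Sum>i\<le>N. Q ^ (N - i) * qbinomial Q N i * Q ^ (Suc i choose 2) * y ^ (N - i))"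
  proof (rule sum.cong)
    fix i assume "i \<in> {..N}"
    then have "Q ^ N * Q ^ (i choose 2) = Q ^ (N - i) * Q ^ (Suc i choose 2)"
      by (simp add: Suc_choose_two flip: power_add)
    moreover have "Q ^ N * t i * y ^ (N - i) =
        qbinomial Q N i * (Q ^ N * Q ^ (i choose 2)) * y ^ (N - i)"
      by (simp add: t_def mult_ac)
    ultimately show "Q ^ N * t i * y ^ (N - i) =
        Q ^ (N - i) * qbinomial Q N i * Q ^ (Suc i choose 2) * y ^ (N - i)"
      by (simp add: mult_ac)
  qed simp
  also have "y ^ Suc N + (\<Sum>i\<le>N. t (Suc i) * y ^ (N - i))
        + (\<Sum>i\<le>N. Q ^ (N - i) * qbinomial Q N i * Q ^ (Suc i choose 2) * y ^ (N - i))
      = (\<Sum>i\<le>Suc N. qbinomial Q (Suc N) i * Q ^ (i choose 2) * y ^ (Suc N - i))"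
    by (subst sum.atMost_Suc_shift)
       (simp add: t_def sum.distrib[symmetric] algebra_simps Suc_diff_le numeral_2_eq_2)
  finally show ?case .
qed

section \<open>Products of \<open>1 + X\<^sup>e\<close> over GF(2)\<close>

lemma bit_fps_minus_eq_plus: "(f :: bit fps) - g = f + g"
  by (rule fps_ext) simp

lemma bit_fps_add_self [simp]: "(f :: bit fps) + f = 0"
  by (rule fps_ext) (simp only: fps_add_nth fps_zero_nth add_bit_eq_xor, simp)

lemma bit_fps_two [simp]: "(2 :: bit fps) = 0"
  using bit_fps_add_self[of 1] by (simp only: one_add_one)

lemma bit_fps_one_plus_X_power_squared:
  "(1 + fps_X ^ e :: bit fps) * (1 + fps_X ^ e) = 1 + fps_X ^ (2 * e)"
proof -
  have "(1 + fps_X ^ e :: bit fps) * (1 + fps_X ^ e) = 1 + (fps_X ^ e + fps_X ^ e) + fps_X ^ (e + e)"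
    by (simp add: algebra_simps power_add)
  then show ?thesis
    by (simp add: mult_2)
qed

definition prod_upto :: "nat \<Rightarrow> bit fps" where
  "prod_upto M = (\<Prod>m<M. 1 + fps_X ^ Suc m)"

definition prod_mult4 :: "nat \<Rightarrow> bit fps" where
  "prod_mult4 L = (\<Prod>j<L. 1 + fps_X ^ (4 * j + 4))"

definition prod_odd :: "nat \<Rightarrow> bit fps" where
  "prod_odd K = (\<Prod>r<K. (1 + fps_X ^ (4 * r + 1)) * (1 + fps_X ^ (4 * r + 3)))"

lemma prod_upto_cong:
  assumes "j \<le> L" shows "fps_cong (Suc j) (prod_upto j) (prod_upto L)"
proof -
  have "L = j + (L - j)"
    using assms by simp
  then have "prod_upto L = prod_upto j * (\<Prod>t<L - j. 1 + fps_X ^ Suc (j + t))"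
    unfolding prod_upto_def by (subst \<open>L = _\<close>) (rule prod_lessThan_add)
  moreover have "fps_cong (Suc j) (\<Prod>t<L - j. 1 + fps_X ^ Suc (j + t) :: bit fps) 1"
    by (rule fps_cong_prod_one_plus_X_power) simp
  ultimately show ?thesis
    using fps_cong_mult_left[of "Suc j" _ 1 "prod_upto j"] by (simp add: fps_cong_sym)
qed

lemma prod_mult4_cong:
  assumes "j \<le> L" shows "fps_cong (4 * j + 4) (prod_mult4 j) (prod_mult4 L)"
proof -
  have "L = j + (L - j)"
    using assms by simp
  then have "prod_mult4 L = prod_mult4 j * (\<Prod>t<L - j. 1 + fps_X ^ (4 * (j + t) + 4))"
    unfolding prod_mult4_def by (subst \<open>L = _\<close>) (rule prod_lessThan_add)
  moreover have "fps_cong (4 * j + 4) (\<Prod>t<L - j. 1 + fps_X ^ (4 * (j + t) + 4) :: bit fps) 1"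
    by (rule fps_cong_prod_one_plus_X_power) simp
  ultimately show ?thesis
    using fps_cong_mult_left[of "4 * j + 4" _ 1 "prod_mult4 j"] by (simp add: fps_cong_sym)
qed

lemma nth_0_prod_mult4 [simp]: "fps_nth (prod_mult4 L) 0 = 1"
  unfolding prod_mult4_def by (induction L) simp_all

lemma prod_upto_ne_0: "prod_upto M \<noteq> 0"
proof -
  have "fps_nth (prod_upto M) 0 = 1"
    unfolding prod_upto_def by (induction M) simp_all
  then show ?thesis by auto
qed

lemma qpochhammer_X4: "qpochhammer (fps_X ^ 4) j = prod_mult4 j"
proof -
  have "(fps_X ^ 4 :: bit fps) ^ Suc t = fps_X ^ (4 * t + 4)" for t
  proof -
    have "4 * Suc t = 4 * t + 4" by simp
    then show ?thesis by (simp only: power_mult[symmetric])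
  qed
  then show ?thesis
    unfolding qpochhammer_def prod_mult4_def bit_fps_minus_eq_plus by simp
qed

lemma prod_upto_squared: "prod_upto M * prod_upto M = (\<Prod>j<M. 1 + fps_X ^ (2 * j + 2))"
  unfolding prod_upto_def prod.distrib[symmetric]
  by (intro prod.cong refl) (simp only: bit_fps_one_plus_X_power_squared, simp)

lemma prod_upto_4K: "prod_upto (4 * K) = prod_odd K * (\<Prod>j<2 * K. 1 + fps_X ^ (2 * j + 2))"
proof (induction K)
  case 0
  then show ?case by (simp add: prod_upto_def prod_odd_def)
next
  case (Suc K)
  have upto_Suc: "prod_upto (Suc M) = prod_upto M * (1 + fps_X ^ Suc M)" for M
    by (simp add: prod_upto_def)
  have odd_Suc: "prod_odd (Suc K) = prod_odd K * ((1 + fps_X ^ (4 * K + 1)) * (1 + fps_X ^ (4 * K + 3)))"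
    by (simp add: prod_odd_def)
  have even_Suc: "(\<Prod>j<Suc M. 1 + fps_X ^ (2 * j + 2)) =
      (\<Prod>j<M. 1 + fps_X ^ (2 * j + 2)) * (1 + (fps_X :: bit fps) ^ (2 * M + 2))" for M
    by simp
  have n: "4 * Suc K = Suc (Suc (Suc (Suc (4 * K))))" "2 * Suc K = Suc (Suc (2 * K))"
    "4 * K + 1 = Suc (4 * K)" "4 * K + 3 = Suc (Suc (Suc (4 * K)))"
    "2 * (2 * K) + 2 = Suc (Suc (4 * K))" "2 * Suc (2 * K) + 2 = Suc (Suc (Suc (Suc (4 * K))))"
    by simp_all
  show ?case
    unfolding n(1,2) upto_Suc even_Suc odd_Suc Suc.IH n(3-6) by (simp only: mult_ac)
qed

lemma euler_cong: "fps_cong (Suc (2 * K)) (prod_upto (2 * K) * prod_odd K) 1"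
proof -
  define T where "T = (\<Prod>i<2 * K. 1 + fps_X ^ Suc (2 * K + i) :: bit fps)"
  define E where "E = prod_upto (2 * K) * prod_upto (2 * K)"
  have split: "prod_upto (4 * K) = prod_upto (2 * K) * T"
    using prod_lessThan_add[where m = "2 * K" and n = "2 * K"]
    by (simp add: prod_upto_def T_def mult_2 flip: mult_2_right)
  have "(prod_upto (2 * K) * prod_odd K) * E = prod_upto (2 * K) * prod_upto (4 * K)"
    by (simp only: E_def prod_upto_squared prod_upto_4K mult.assoc)
  also have "\<dots> = T * E"
    unfolding split E_def by (simp only: mult_ac)
  finally have "(prod_upto (2 * K) * prod_odd K) * E = T * E" .
  moreover have "E \<noteq> 0"
    by (simp add: E_def prod_upto_ne_0)
  ultimately have "prod_upto (2 * K) * prod_odd K = T"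
    by simp
  moreover have "fps_cong (Suc (2 * K)) T 1"
    unfolding T_def by (rule fps_cong_prod_one_plus_X_power) simp
  ultimately show ?thesis
    by simp
qed

lemma prod_not_mult4_mult_prod_mult4:
  "(\<Prod>m<N. if 4 dvd Suc m then 1 else 1 - fps_X ^ Suc m) * prod_mult4 (N div 4) = prod_upto N"
proof (induction N)
  case 0
  then show ?case by (simp add: prod_mult4_def prod_upto_def)
next
  case (Suc N)
  show ?case
  proof (cases "4 dvd Suc N")
    case True
    then have d: "Suc N div 4 = Suc (N div 4)" and e: "4 * (N div 4) + 4 = Suc N"
      by presburger+
    have "prod_mult4 (Suc N div 4) = prod_mult4 (N div 4) * (1 + fps_X ^ Suc N)"
      unfolding d prod_mult4_def prod.lessThan_Suc e ..
    with True Suc.IH show ?thesis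
      by (simp only: prod.lessThan_Suc prod_upto_def if_True mult_1_left mult_1_right mult_ac)
  next
    case False
    then have "Suc N div 4 = N div 4"
      by presburger
    with False Suc.IH show ?thesis
      by (simp add: prod_upto_def bit_fps_minus_eq_plus mult_ac)
  qed
qed

section \<open>The Jacobi triple product modulo 2\<close>

definition hexagonal :: "int \<Rightarrow> nat" where
  "hexagonal m = nat (2 * m\<^sup>2 - m)"

lemma of_nat_hexagonal: "int (hexagonal m) = 2 * m\<^sup>2 - m"
  and abs_le_hexagonal: "\<bar>m\<bar> \<le> int (hexagonal m)"
proof -
  have "\<bar>m\<bar> \<le> 2 * m\<^sup>2 - m"
  proof (cases "m \<ge> 1")
    case True
    then have "m * 1 \<le> m * m"
      by (intro mult_left_mono) auto
    then show ?thesis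
      using True by (simp add: power2_eq_square)
  next
    case False
    then show ?thesis
      by (simp add: power2_eq_square)
  qed
  moreover have "0 \<le> 2 * m\<^sup>2 - m"
    using calculation by linarith
  ultimately show "int (hexagonal m) = 2 * m\<^sup>2 - m" and "\<bar>m\<bar> \<le> int (hexagonal m)"
    by (simp_all add: hexagonal_def)
qed

lemma prod_power_mult4: "(\<Prod>r<K. x ^ (4 * r)) = (x :: 'a :: comm_monoid_mult) ^ (2 * K * (K - 1))"
proof (induction K)
  case (Suc K)
  have "2 * K * (K - 1) + 4 * K = 2 * Suc K * (Suc K - 1)"
    by (cases K) (simp_all add: algebra_simps)
  then show ?case
    by (simp only: prod.lessThan_Suc Suc.IH flip: power_add)
qed simp

lemma X_power_mult_one_plus_X_power:
  "fps_X ^ a * (1 + fps_X ^ d) = fps_X ^ a + (fps_X :: 'a :: comm_semiring_1 fps) ^ (a + d)"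
  by (simp add: distrib_left power_add)

lemma prod_shifted_eq_prod_odd:
  assumes "1 \<le> K"
  shows "(\<Prod>r<2 * K. fps_X ^ (4 * K - 1) + (fps_X ^ 4) ^ r)
         = fps_X ^ (2 * K * (K - 1) + K * (4 * K - 1)) * prod_odd K"
proof -
  define f where "f r = (fps_X ^ (4 * K - 1) + (fps_X ^ 4) ^ r :: bit fps)" for r
  have low: "(\<Prod>r<K. f r) = fps_X ^ (2 * K * (K - 1)) * (\<Prod>r<K. 1 + fps_X ^ (4 * r + 3))"
  proof -
    have "(\<Prod>r<K. f r) = (\<Prod>r<K. fps_X ^ (4 * r) * (1 + fps_X ^ (4 * (K - Suc r) + 3)))"
    proof (intro prod.cong refl)
      fix r assume "r \<in> {..<K}"
      then have "4 * r + (4 * (K - Suc r) + 3) = 4 * K - 1"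
        by auto
      then show "f r = fps_X ^ (4 * r) * (1 + fps_X ^ (4 * (K - Suc r) + 3))"
        unfolding X_power_mult_one_plus_X_power f_def by (simp add: power_mult[symmetric] add.commute)
    qed
    then show ?thesis
      by (simp add: prod.distrib prod_power_mult4
          prod_lessThan_rev[where f = "\<lambda>r. 1 + fps_X ^ (4 * r + 3)"])
  qed
  have high: "(\<Prod>r<K. f (K + r)) = fps_X ^ (K * (4 * K - 1)) * (\<Prod>r<K. 1 + fps_X ^ (4 * r + 1))"
  proof -
    have "(\<Prod>r<K. f (K + r)) = (\<Prod>r<K. fps_X ^ (4 * K - 1) * (1 + fps_X ^ (4 * r + 1)))"
    proof (intro prod.cong refl)
      fix r
      have "4 * K - 1 + (4 * r + 1) = 4 * (K + r)"
        using assms by simp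
      then show "f (K + r) = fps_X ^ (4 * K - 1) * (1 + fps_X ^ (4 * r + 1))"
        unfolding X_power_mult_one_plus_X_power f_def by (simp add: power_mult[symmetric])
    qed
    then show ?thesis
      by (simp add: prod.distrib power_mult[symmetric] mult.commute)
  qed
  have "(\<Prod>r<2 * K. f r) = (\<Prod>r<K. f r) * (\<Prod>r<K. f (K + r))"
    using prod_lessThan_add[where m = K and n = K] by (simp add: mult_2)
  also have "\<dots> = fps_X ^ (2 * K * (K - 1) + K * (4 * K - 1)) * prod_odd K"
    unfolding low high prod_odd_def prod.distrib power_add by (simp only: mult_ac)
  finally show ?thesis
    unfolding f_def .
qed

lemma exponent_eq_hexagonal:
  assumes "i \<le> 2 * K" "1 \<le> K"
  shows "4 * (i choose 2) + (4 * K - 1) * (2 * K - i)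
         = 2 * K * (K - 1) + K * (4 * K - 1) + hexagonal (int i - int K)"
proof -
  have t: "2 * int (i choose 2) = int i * (int i - 1)"
    by (induction i) (simp_all add: Suc_choose_two algebra_simps numeral_2_eq_2)
  have k: "int (4 * K - 1) = 4 * int K - 1" "int (2 * K - i) = 2 * int K - int i"
    "int (K - 1) = int K - 1"
    using assms by simp_all
  have "int (4 * (i choose 2) + (4 * K - 1) * (2 * K - i))
       = 2 * (2 * int (i choose 2)) + (4 * int K - 1) * (2 * int K - int i)"
    by (simp only: of_nat_add of_nat_mult k of_nat_numeral mult.assoc)
  also have "\<dots> = 2 * int K * (int K - 1) + int K * (4 * int K - 1) + int (hexagonal (int i - int K))"
    unfolding t of_nat_hexagonal by (simp add: algebra_simps power2_eq_square)
  also have "\<dots> = int (2 * K * (K - 1) + K * (4 * K - 1) + hexagonal (int i - int K))"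
    by (simp only: of_nat_add of_nat_mult k of_nat_numeral)
  finally show ?thesis
    by (simp only: of_nat_eq_iff)
qed

text \<open>A truncated form of \<open>[M, i]\<^sub>Q (Q; Q)\<^sub>\<infinity> \<longrightarrow> 1\<close> as \<open>i, M - i \<longrightarrow> \<infinity>\<close>, for \<open>Q = X\<^sup>4\<close>.\<close>

lemma qbinomial_X4_mult_prod_mult4_cong:
  assumes "i \<le> M" "M \<le> L"
  shows "fps_cong (4 * min i (M - i) + 4) (qbinomial (fps_X ^ 4) M i * prod_mult4 L) 1"
proof -
  define k where "k = 4 * min i (M - i) + 4"
  define q where "q = qbinomial (fps_X ^ 4 :: bit fps) M i"
  have "fps_cong k (prod_mult4 j) (prod_mult4 L)" if "min i (M - i) \<le> j" "j \<le> L" for j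
    using prod_mult4_cong[OF that(2)] by (rule fps_cong_mono) (use that in \<open>simp add: k_def\<close>)
  then have i: "fps_cong k (prod_mult4 L) (prod_mult4 i)"
    and Mi: "fps_cong k (prod_mult4 L) (prod_mult4 (M - i))"
    and M: "fps_cong k (prod_mult4 M) (prod_mult4 L)"
    using assms by (auto intro: fps_cong_sym)
  have "q * prod_mult4 i * prod_mult4 (M - i) = prod_mult4 M"
    using qbinomial_mult_qpochhammer[OF assms(1), of "fps_X ^ 4 :: bit fps"]
    unfolding q_def qpochhammer_X4 .
  moreover have "fps_cong k (q * prod_mult4 L * prod_mult4 L) (q * prod_mult4 i * prod_mult4 (M - i))"
    by (intro fps_cong_mult i Mi fps_cong_refl)
  ultimately have "fps_cong k ((q * prod_mult4 L) * prod_mult4 L) (1 * prod_mult4 L)"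
    using M by (auto intro: fps_cong_trans)
  then show ?thesis
    unfolding k_def[symmetric] q_def[symmetric] by (rule fps_cong_cancel) simp
qed

lemma prod_odd_mult_expansion:
  assumes "1 \<le> K"
  shows "prod_odd K * P =
    (\<Sum>i\<le>2 * K. fps_X ^ hexagonal (int i - int K) * (qbinomial (fps_X ^ 4) (2 * K) i * P))"
proof -
  define c where "c = 2 * K * (K - 1) + K * (4 * K - 1)"
  have "fps_X ^ c * (prod_odd K * P) = (\<Prod>r<2 * K. fps_X ^ (4 * K - 1) + (fps_X ^ 4) ^ r) * P"
    unfolding prod_shifted_eq_prod_odd[OF assms] c_def by (simp only: mult.assoc)
  also have "\<dots> = (\<Sum>i\<le>2 * K. qbinomial (fps_X ^ 4) (2 * K) i *
      ((fps_X ^ 4) ^ (i choose 2) * (fps_X ^ (4 * K - 1)) ^ (2 * K - i))) * P"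
    by (simp add: q_binomial_theorem mult.assoc)
  also have "\<dots> = fps_X ^ c * (\<Sum>i\<le>2 * K. fps_X ^ hexagonal (int i - int K) *
      (qbinomial (fps_X ^ 4) (2 * K) i * P))"
    unfolding sum_distrib_right sum_distrib_left
  proof (rule sum.cong[OF refl])
    fix i assume "i \<in> {..2 * K}"
    then have i: "i \<le> 2 * K"
      by simp
    have "(fps_X ^ 4) ^ (i choose 2) * (fps_X ^ (4 * K - 1)) ^ (2 * K - i) =
        fps_X ^ c * (fps_X :: bit fps) ^ hexagonal (int i - int K)"
      unfolding c_def power_add[symmetric] exponent_eq_hexagonal[OF i assms, symmetric]
      by (simp only: power_mult power_add)
    then show "qbinomial (fps_X ^ 4) (2 * K) i *
        ((fps_X ^ 4) ^ (i choose 2) * (fps_X ^ (4 * K - 1)) ^ (2 * K - i)) * P =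
      fps_X ^ c * (fps_X ^ hexagonal (int i - int K) * (qbinomial (fps_X ^ 4) (2 * K) i * P))"
      by (simp only: mult_ac)
  qed
  finally show ?thesis
    by simp
qed

lemma hexagonal_term_cong:
  assumes "2 * N < K" and "i \<le> 2 * K"
  shows "fps_cong (Suc N)
    (fps_X ^ hexagonal (int i - int K) * (qbinomial (fps_X ^ 4) (2 * K) i * prod_mult4 (2 * K)))
    (fps_X ^ hexagonal (int i - int K))"
proof (cases "Suc N \<le> hexagonal (int i - int K)")
  case True
  then show ?thesis
    using fps_cong_X_power_mult_zero[OF True, of "qbinomial (fps_X ^ 4) (2 * K) i * prod_mult4 (2 * K)"]
      fps_cong_X_power_mult_zero[OF True, of "1 :: bit fps"]
    by (auto intro: fps_cong_trans fps_cong_sym)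
next
  case False
  then have "\<bar>int i - int K\<bar> \<le> int N"
    using abs_le_hexagonal[of "int i - int K"] by simp
  then have "Suc N \<le> 4 * min i (2 * K - i) + 4"
    using assms by (auto simp: min_def abs_le_iff)
  with qbinomial_X4_mult_prod_mult4_cong[OF assms(2) order_refl]
  have "fps_cong (Suc N) (qbinomial (fps_X ^ 4) (2 * K) i * prod_mult4 (2 * K)) 1"
    by (rule fps_cong_mono)
  then show ?thesis
    using fps_cong_mult_left by fastforce
qed

lemma jacobi_triple_product_cong:
  assumes "2 * N < K"
  shows "fps_cong (Suc N) (prod_odd K * prod_mult4 (2 * K))
    (\<Sum>i\<le>2 * K. fps_X ^ hexagonal (int i - int K))"
proof -
  have "prod_odd K * prod_mult4 (2 * K) = (\<Sum>i\<le>2 * K. fps_X ^ hexagonal (int i - int K) *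
      (qbinomial (fps_X ^ 4) (2 * K) i * prod_mult4 (2 * K)))"
    using assms by (intro prod_odd_mult_expansion) simp
  also have "fps_cong (Suc N) \<dots> (\<Sum>i\<le>2 * K. fps_X ^ hexagonal (int i - int K))"
    using assms by (intro fps_cong_sum hexagonal_term_cong) auto
  finally show ?thesis .
qed

lemma partition_gf_4_cong:
  fixes N :: nat
  defines "K \<equiv> 2 * N + 1"
  shows "fps_cong (Suc N) (partition_gf 4 N :: bit fps)
    (\<Sum>i\<le>2 * K. fps_X ^ hexagonal (int i - int K))"
proof -
  define Q where "Q = (\<Prod>m<N. if 4 dvd Suc m then 1 else 1 - fps_X ^ Suc m :: bit fps)"
  define P where "P = prod_odd K * prod_mult4 (2 * K)"
  have "N div 4 \<le> 2 * K"
    by (simp add: K_def)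
  from prod_mult4_cong[OF this]
  have "fps_cong (Suc N) (prod_mult4 (N div 4)) (prod_mult4 (2 * K))"
    by (rule fps_cong_mono) presburger
  then have "fps_cong (Suc N) (Q * prod_mult4 (2 * K) * prod_odd K) (Q * prod_mult4 (N div 4) * prod_odd K)"
    by (intro fps_cong_mult fps_cong_refl) (rule fps_cong_sym)
  moreover have "Q * prod_mult4 (2 * K) * prod_odd K = Q * P"
    by (simp only: P_def mult_ac)
  moreover have "Q * prod_mult4 (N div 4) * prod_odd K = prod_upto N * prod_odd K"
    by (simp only: Q_def prod_not_mult4_mult_prod_mult4)
  ultimately have "fps_cong (Suc N) (Q * P) (prod_upto N * prod_odd K)"
    by simp
  also have "fps_cong (Suc N) (prod_upto N * prod_odd K) (prod_upto (2 * K) * prod_odd K)"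
    using prod_upto_cong[of N "2 * K"] by (intro fps_cong_mult fps_cong_refl) (simp add: K_def)
  also have "fps_cong (Suc N) (prod_upto (2 * K) * prod_odd K) 1"
    using euler_cong[of K] by (rule fps_cong_mono) (simp add: K_def)
  finally have "fps_cong (Suc N) (partition_gf 4 N * (Q * P)) (partition_gf 4 N * 1)"
    by (rule fps_cong_mult_left)
  moreover have "partition_gf 4 N * (Q * P) = P"
    using partition_gf_mult_prod[of 4 N, where 'a = bit] by (simp add: Q_def mult.assoc[symmetric])
  ultimately have "fps_cong (Suc N) P (partition_gf 4 N)"
    by simp
  then have "fps_cong (Suc N) (partition_gf 4 N) P"
    by (rule fps_cong_sym)
  also have "fps_cong (Suc N) P (\<Sum>i\<le>2 * K. fps_X ^ hexagonal (int i - int K))"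
    unfolding P_def by (rule jacobi_triple_product_cong) (simp add: K_def)
  finally show ?thesis .
qed

lemma odd_b4_imp_hexagonal:
  assumes "odd (b 4 N)"
  shows "\<exists>m. N = hexagonal m"
proof (rule ccontr)
  assume not_hex: "\<nexists>m. N = hexagonal m"
  define K where "K = 2 * N + 1"
  have "(of_nat (b 4 N) :: bit) = fps_nth (partition_gf 4 N) N"
    by (simp add: partition_gf_nth)
  also have "\<dots> = (\<Sum>i\<le>2 * K. fps_nth ((fps_X :: bit fps) ^ hexagonal (int i - int K)) N)"
    using partition_gf_4_cong[of N] by (simp add: fps_cong_def fps_sum_nth K_def)
  also have "\<dots> = 0"
    using not_hex by (intro sum.neutral ballI) auto
  finally have "(of_nat (b 4 N) :: bit) = 0" .
  then show False
    using assms by (metis even_of_nat_iff even_zero)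
qed

lemma eight_mul_hexagonal_plus_one: "8 * hexagonal m + 1 = (nat \<bar>4 * m - 1\<bar>)\<^sup>2"
proof -
  have "int (8 * hexagonal m + 1) = (4 * m - 1)\<^sup>2"
    by (simp add: of_nat_hexagonal algebra_simps power2_eq_square)
  also have "\<dots> = int ((nat \<bar>4 * m - 1\<bar>)\<^sup>2)"
    by simp
  finally show ?thesis
    by (simp only: of_nat_eq_iff)
qed

lemma prime_power_mult_eq_square:
  assumes "prime (p :: nat)" and "p ^ (2 * a) * r = w\<^sup>2"
  shows "\<exists>v. r = v\<^sup>2"
  using assms(2)
proof (induction a arbitrary: w)
  case 0
  then show ?case by auto
next
  case (Suc a)
  have "p dvd w\<^sup>2"
    using Suc.prems by (metis dvd_mult2 dvd_triv_left mult_2 power_Suc power_add)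
  then have "p dvd w"
    using assms(1) prime_dvd_power by blast
  then obtain w' where w: "w = p * w'"
    by (rule dvdE)
  have "p ^ (2 * Suc a) = p\<^sup>2 * p ^ (2 * a)"
    by (metis mult_Suc_right power_add)
  then have "p\<^sup>2 * (p ^ (2 * a) * r) = p\<^sup>2 * w'\<^sup>2"
    using Suc.prems unfolding w by (simp only: mult.assoc power_mult_distrib)
  moreover have "p\<^sup>2 \<noteq> 0"
    using prime_gt_0_nat[OF assms(1)] by simp
  ultimately have "p ^ (2 * a) * r = w'\<^sup>2"
    using mult_left_cancel by blast
  then show ?case
    by (rule Suc.IH)
qed

lemma odd_power_even_mod_8:
  assumes "odd (p :: nat)" shows "p ^ (2 * a) mod 8 = 1"
proof -
  have "p mod 8 = 1 \<or> p mod 8 = 3 \<or> p mod 8 = 5 \<or> p mod 8 = 7"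
    using assms by presburger
  then have "p\<^sup>2 mod 8 = 1"
    by (auto simp: power_mod[of p 8 2, symmetric])
  then show ?thesis
    by (simp add: power_mult power_mod[of "p\<^sup>2", symmetric])
qed

lemma eight_mul_plus_one_eq:
  fixes p a n j :: nat
  assumes "odd p"
  shows "8 * (p ^ (2 * a + 1) * n + ((8 * j + 1) * p ^ (2 * a) - 1) div 8) + 1
         = p ^ (2 * a) * (8 * p * n + 8 * j + 1)"
proof -
  define t where "t = (8 * j + 1) * p ^ (2 * a)"
  have "t mod 8 = ((8 * j + 1) mod 8) * (p ^ (2 * a) mod 8) mod 8"
    unfolding t_def by (rule mod_mult_eq[symmetric])
  then have "t mod 8 = 1"
    using odd_power_even_mod_8[OF assms, of a] by simp
  then have "8 * ((t - 1) div 8) + 1 = t"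
    by presburger
  then show ?thesis
    by (simp add: t_def algebra_simps)
qed

lemma Legendre_neq_minus_one_if_square:
  fixes a p k v :: nat
  assumes "v\<^sup>2 = a + p * k"
  shows "Legendre (int a) (int p) \<noteq> -1"
proof -
  have "[int v ^ 2 = int a] (mod int p)"
    using arg_cong[OF assms, of int] by (simp add: cong_def)
  then have "QuadRes (int p) (int a)"
    unfolding QuadRes_def by blast
  then show ?thesis
    by (simp add: Legendre_def)
qed

theorem theorem3p11:
  fixes p \<alpha> n j :: nat
  assumes "prime p" and "odd p"
    and "j \<le> p - 1"
    and "Legendre (int (8 * j + 1)) (int p) = -1"
  shows "even (b 4 (p ^ (2 * \<alpha> + 1) * n + ((8 * j + 1) * p ^ (2 * \<alpha>) - 1) div 8))"
proof (rule ccontr)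
  define N where "N = p ^ (2 * \<alpha> + 1) * n + ((8 * j + 1) * p ^ (2 * \<alpha>) - 1) div 8"
  assume "\<not> even (b 4 (p ^ (2 * \<alpha> + 1) * n + ((8 * j + 1) * p ^ (2 * \<alpha>) - 1) div 8))"
  then obtain m where "N = hexagonal m"
    using odd_b4_imp_hexagonal unfolding N_def by blast
  then have "p ^ (2 * \<alpha>) * (8 * p * n + 8 * j + 1) = (nat \<bar>4 * m - 1\<bar>)\<^sup>2"
    using eight_mul_plus_one_eq[OF assms(2), of \<alpha> n j] eight_mul_hexagonal_plus_one[of m]
    unfolding N_def by simp
  then obtain v where "8 * p * n + 8 * j + 1 = v\<^sup>2"
    using prime_power_mult_eq_square[OF assms(1)] by blast
  then have "v\<^sup>2 = (8 * j + 1) + p * (8 * n)"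
    by (simp add: algebra_simps)
  then show False
    using Legendre_neq_minus_one_if_square assms(4) by blast
qed

end
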